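(* If a group $G$ has a normal subgroup $N$ that is a free group and $G/N$ is amenable, then $G$ is residually amenable.
   Context: Groups are discrete. A group is residually amenable if every non-trivial element has non-trivial image under some surjective homomorphism onto an amenable group. *)

theory Defs
  imports "HOL-Algebra.Algebra"
begin

definition amenable :: "('a, 'b) monoid_scheme \<Rightarrow> bool" where
  "amenable H \<longleftrightarrow> group H \<and>
     (\<exists>\<mu> :: 'a set \<Rightarrow> real.
        \<mu> (carrier H) = 1 \<and>
        (\<forall>A. A \<subseteq> carrier H \<longrightarrow> \<mu> A \<ge> 0) \<and>
        (\<forall>A B. A \<subseteq> carrier H \<longrightarrow> B \<subseteq> carrier H \<longrightarrow> A \<inter> B = {} \<longrightarrow>
               \<mu> (A \<union> B) = \<mu> A + \<mu> B) \<and>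
        (\<forall>g A. g \<in> carrier H \<longrightarrow> A \<subseteq> carrier H \<longrightarrow> \<mu> (g <#\<^bsub>H\<^esub> A) = \<mu> A))"

definition eval_word :: "('a, 'b) monoid_scheme \<Rightarrow> (bool \<times> 'a) list \<Rightarrow> 'a" where
  "eval_word G ws = foldr (\<lambda>(b, x) acc. (if b then x else inv\<^bsub>G\<^esub> x) \<otimes>\<^bsub>G\<^esub> acc) ws \<one>\<^bsub>G\<^esub>"

definition reduced_word :: "(bool \<times> 'a) list \<Rightarrow> bool" where
  "reduced_word ws \<longleftrightarrow>
     (\<forall>i. Suc i < length ws \<longrightarrow>
        \<not> (snd (ws ! i) = snd (ws ! Suc i) \<and> fst (ws ! i) \<noteq> fst (ws ! Suc i)))"

definition free_group_on :: "('a, 'b) monoid_scheme \<Rightarrow> 'a set \<Rightarrow> bool" where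
  "free_group_on G B \<longleftrightarrow> group G \<and> B \<subseteq> carrier G \<and>
     generate G B = carrier G \<and>
     (\<forall>ws. ws \<noteq> [] \<longrightarrow> set (map snd ws) \<subseteq> B \<longrightarrow> reduced_word ws \<longrightarrow>
            eval_word G ws \<noteq> \<one>\<^bsub>G\<^esub>)"

definition is_free_group :: "('a, 'b) monoid_scheme \<Rightarrow> bool" where
  "is_free_group G \<longleftrightarrow> (\<exists>B. free_group_on G B)"

text \<open>Target groups are taken
  with carrier type 'a set, which suffices since every quotient G/K has such
  a carrier.\<close>
definition residually_amenable :: "('a, 'b) monoid_scheme \<Rightarrow> bool" where
  "residually_amenable G \<longleftrightarrow>
     (\<forall>g \<in> carrier G. g \<noteq> \<one>\<^bsub>G\<^esub> \<longrightarrow>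
        (\<exists>(H :: 'a set monoid) h. group H \<and> amenable H \<and> h \<in> hom G H \<and>
            h ` carrier G = carrier H \<and> h g \<noteq> \<one>\<^bsub>H\<^esub>))"

end

theory Submission
  imports Defs "HOL-Analysis.Analysis"
begin

text \<open>If \<open>g \<notin> N\<close>, the amenable quotient \<open>G/N\<close> already separates \<open>g\<close>. If \<open>g \<in> N\<close> is nontrivial,
  write it as a nonempty reduced word in a free basis of \<open>N\<close>; letting the letters act on the
  positions \<open>0, \<dots>, n\<close> of the word gives a homomorphism \<open>\<psi>\<close> from \<open>N\<close> to a finite symmetric group
  \<open>H\<close> with \<open>\<psi> g \<noteq> 1\<close>. The common kernel \<open>K\<close> of all homomorphisms \<open>N \<rightarrow> H\<close> is invariant under
  conjugation by \<open>G\<close>, hence normal in \<open>G\<close>, and misses \<open>g\<close>. An element of a finitely generated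
  subgroup of \<open>N/K\<close> is determined by the values of finitely many homomorphisms to \<open>H\<close> on finitely
  many generators, so \<open>N/K\<close> is locally finite and therefore amenable. Then \<open>G/K\<close>, an extension
  of the amenable group \<open>G/N\<close> by \<open>N/K\<close>, is amenable, and it separates \<open>g\<close>.\<close>

section \<open>Words in a group\<close>

definition inverse_word :: "(bool \<times> 'a) list \<Rightarrow> (bool \<times> 'a) list" where
  "inverse_word ws = rev (map (apfst Not) ws)"

lemma inverse_word_simps [simp]:
  "inverse_word [] = []"
  "inverse_word ((b, x) # ws) = inverse_word ws @ [(\<not> b, x)]"
  "inverse_word (u @ v) = inverse_word v @ inverse_word u"
  by (simp_all add: inverse_word_def)

lemma letters_inverse_word [simp]: "snd ` set (inverse_word ws) = snd ` set ws"
  by (simp add: inverse_word_def image_image)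

lemma map_apsnd_inverse_word: "map (apsnd f) (inverse_word ws) = inverse_word (map (apsnd f) ws)"
  by (induction ws) auto

lemma eval_word_Nil [simp]: "eval_word G [] = \<one>\<^bsub>G\<^esub>"
  by (simp add: eval_word_def)

lemma eval_word_Cons [simp]:
  "eval_word G ((b, x) # ws) = (if b then x else inv\<^bsub>G\<^esub> x) \<otimes>\<^bsub>G\<^esub> eval_word G ws"
  by (simp add: eval_word_def)

lemma not_reduced_wordE:
  assumes "\<not> reduced_word ws"
  obtains p b x s where "ws = p @ (b, x) # (\<not> b, x) # s"
proof -
  from assms obtain i where i: "Suc i < length ws" "snd (ws ! i) = snd (ws ! Suc i)"
      "fst (ws ! i) \<noteq> fst (ws ! Suc i)"
    unfolding reduced_word_def by blast
  have "ws = take i ws @ ws ! i # ws ! Suc i # drop (Suc (Suc i)) ws"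
    using i(1) by (metis Cons_nth_drop_Suc Suc_lessD append_take_drop_id)
  moreover have "ws ! Suc i = (\<not> fst (ws ! i), snd (ws ! i))"
    using i by (cases "ws ! Suc i") auto
  ultimately show ?thesis using that by (metis prod.collapse)
qed

context group
begin

lemma eval_word_closed [intro, simp]: "set (map snd ws) \<subseteq> carrier G \<Longrightarrow> eval_word G ws \<in> carrier G"
  by (induction ws) auto

lemma eval_word_append:
  "set (map snd u) \<subseteq> carrier G \<Longrightarrow> set (map snd v) \<subseteq> carrier G \<Longrightarrow>
    eval_word G (u @ v) = eval_word G u \<otimes> eval_word G v"
  by (induction u) (auto simp: m_assoc)

lemma eval_inverse_word:
  "set (map snd ws) \<subseteq> carrier G \<Longrightarrow> eval_word G (inverse_word ws) = inv (eval_word G ws)"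
proof (induction ws)
  case (Cons a ws)
  obtain b x where a: "a = (b, x)" by force
  with Cons.prems have x: "x \<in> carrier G" and ws: "set (map snd ws) \<subseteq> carrier G" by auto
  have "eval_word G (inverse_word (a # ws)) = inv (eval_word G ws) \<otimes> (if b then inv x else x)"
    using Cons.IH a x ws by (simp add: eval_word_append)
  also have "\<dots> = inv ((if b then x else inv x) \<otimes> eval_word G ws)"
    using x ws by (auto simp: inv_mult_group)
  finally show ?case using a by simp
qed simp

lemma eval_word_cancel:
  assumes "set (map snd p) \<subseteq> carrier G" "set (map snd s) \<subseteq> carrier G" "x \<in> carrier G"
  shows "eval_word G (p @ (b, x) # (\<not> b, x) # s) = eval_word G (p @ s)"
proof -
  have "eval_word G ((b, x) # (\<not> b, x) # s) = eval_word G s"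
    using assms by (auto simp: m_assoc[symmetric])
  then show ?thesis using assms by (simp add: eval_word_append del: eval_word_Cons)
qed

lemma generate_eval_word:
  assumes "B \<subseteq> carrier G" "y \<in> generate G B"
  obtains ws where "set (map snd ws) \<subseteq> B" "eval_word G ws = y"
proof -
  from assms(2) have "\<exists>ws. set (map snd ws) \<subseteq> B \<and> eval_word G ws = y"
  proof (induction rule: generate.induct)
    case one show ?case by (intro exI[of _ "[]"]) auto
  next
    case (incl h) then show ?case using assms(1) by (intro exI[of _ "[(True, h)]"]) auto
  next
    case (inv h) then show ?case using assms(1) by (intro exI[of _ "[(False, h)]"]) auto
  next
    case (eng h1 h2)
    then obtain u v where "set (map snd u) \<subseteq> B" "eval_word G u = h1"
        "set (map snd v) \<subseteq> B" "eval_word G v = h2" by blast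
    then show ?case using assms(1) by (intro exI[of _ "u @ v"]) (auto simp: eval_word_append)
  qed
  with that show ?thesis by blast
qed

lemma reduced_word_exists:
  assumes "set (map snd ws) \<subseteq> B" "B \<subseteq> carrier G"
  obtains ws' where "set (map snd ws') \<subseteq> B" "reduced_word ws'" "eval_word G ws' = eval_word G ws"
  using assms(1)
proof (induction "length ws" arbitrary: ws rule: less_induct)
  case less
  show ?case
  proof (cases "reduced_word ws")
    case False
    then obtain p b x s where ws: "ws = p @ (b, x) # (\<not> b, x) # s" by (rule not_reduced_wordE)
    have "eval_word G (p @ s) = eval_word G ws"
      unfolding ws using less.prems(2) assms(2) ws by (intro eval_word_cancel[symmetric]) auto
    moreover have "set (map snd (p @ s)) \<subseteq> B" using less.prems(2) ws by auto
    moreover have "length (p @ s) < length ws" using ws by simp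
    ultimately show ?thesis using less.hyps less.prems(1) by metis
  qed (use less in blast)
qed

end

section \<open>The universal property of free groups\<close>

lemma free_group_onD:
  assumes "free_group_on F B"
  shows "group F" "B \<subseteq> carrier F" "generate F B = carrier F"
  using assms by (auto simp: free_group_on_def)

lemma letters_map_apsnd:
  "f \<in> B \<rightarrow> C \<Longrightarrow> set (map snd ws) \<subseteq> B \<Longrightarrow> set (map snd (map (apsnd f) ws)) \<subseteq> C"
  by auto

text \<open>A word over the basis that is trivial in the free group reduces to the empty word by
  cancellations, and the same cancellations apply to its image in any group.\<close>
lemma free_group_trivial_word_map:
  assumes fr: "free_group_on F B" and H: "group H" and f: "f \<in> B \<rightarrow> carrier H"
    and ws: "set (map snd ws) \<subseteq> B" "eval_word F ws = \<one>\<^bsub>F\<^esub>"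
  shows "eval_word H (map (apsnd f) ws) = \<one>\<^bsub>H\<^esub>"
  using ws
proof (induction "length ws" arbitrary: ws rule: less_induct)
  case less
  interpret F: group F using fr by (rule free_group_onD)
  interpret H: group H by (rule H)
  show ?case
  proof (cases "ws = []")
    case False
    then have "\<not> reduced_word ws" using fr less.prems unfolding free_group_on_def by blast
    then obtain p b x s where ws: "ws = p @ (b, x) # (\<not> b, x) # s" by (rule not_reduced_wordE)
    have ps: "set (map snd (p @ s)) \<subseteq> B" "x \<in> B" using less.prems ws by auto
    with free_group_onD(2)[OF fr] have "eval_word F (p @ s) = \<one>\<^bsub>F\<^esub>"
      using less.prems(2) unfolding ws by (subst (asm) F.eval_word_cancel) auto
    then have "eval_word H (map (apsnd f) (p @ s)) = \<one>\<^bsub>H\<^esub>"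
      using ps ws by (intro less.hyps) auto
    moreover have "eval_word H (map (apsnd f) ws) = eval_word H (map (apsnd f) (p @ s))"
      using H.eval_word_cancel[of "map (apsnd f) p" "map (apsnd f) s" "f x" b] ps f
        letters_map_apsnd[OF f, of p] letters_map_apsnd[OF f, of s]
      unfolding ws by auto
    ultimately show ?thesis by simp
  qed simp
qed

definition free_extension ::
  "('a, 'b) monoid_scheme \<Rightarrow> 'a set \<Rightarrow> ('c, 'd) monoid_scheme \<Rightarrow> ('a \<Rightarrow> 'c) \<Rightarrow> 'a \<Rightarrow> 'c" where
  "free_extension F B H f y =
     eval_word H (map (apsnd f) (SOME ws. set (map snd ws) \<subseteq> B \<and> eval_word F ws = y))"

lemma free_extension_eval_word:
  assumes fr: "free_group_on F B" and H: "group H" and f: "f \<in> B \<rightarrow> carrier H"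
    and ws: "set (map snd ws) \<subseteq> B"
  shows "free_extension F B H f (eval_word F ws) = eval_word H (map (apsnd f) ws)"
proof -
  interpret F: group F using fr by (rule free_group_onD)
  interpret H: group H by (rule H)
  have BF: "B \<subseteq> carrier F" using fr by (rule free_group_onD)
  define ws0 where "ws0 = (SOME ws'. set (map snd ws') \<subseteq> B \<and> eval_word F ws' = eval_word F ws)"
  have "set (map snd ws0) \<subseteq> B \<and> eval_word F ws0 = eval_word F ws"
    unfolding ws0_def by (rule someI[of _ ws]) (use ws in auto)
  then have ws0: "set (map snd ws0) \<subseteq> B" "eval_word F ws0 = eval_word F ws" by auto
  have "eval_word F (ws0 @ inverse_word ws) = \<one>\<^bsub>F\<^esub>"
    using ws0 ws BF by (simp add: F.eval_word_append F.eval_inverse_word subset_trans)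
  then have "eval_word H (map (apsnd f) (ws0 @ inverse_word ws)) = \<one>\<^bsub>H\<^esub>"
    using ws0 ws by (intro free_group_trivial_word_map[OF fr H f]) auto
  moreover have c0: "set (map snd (map (apsnd f) ws0)) \<subseteq> carrier H"
    and c: "set (map snd (map (apsnd f) ws)) \<subseteq> carrier H"
    using ws0(1) ws letters_map_apsnd[OF f] by blast+
  moreover have "set (map snd (inverse_word (map (apsnd f) ws))) \<subseteq> carrier H"
    using c by (simp add: image_image)
  ultimately have "eval_word H (map (apsnd f) ws0) \<otimes>\<^bsub>H\<^esub> inv\<^bsub>H\<^esub> eval_word H (map (apsnd f) ws)
      = \<one>\<^bsub>H\<^esub>"
    by (simp only: map_append map_apsnd_inverse_word H.eval_word_append H.eval_inverse_word)
  then have "eval_word H (map (apsnd f) ws0) = eval_word H (map (apsnd f) ws)"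
    using ws0(1) ws letters_map_apsnd[OF f]
    by (metis H.eval_word_closed H.inv_equality H.inv_inv H.inv_closed)
  then show ?thesis unfolding free_extension_def ws0_def[symmetric] by simp
qed

lemma free_extension_hom:
  assumes fr: "free_group_on F B" and H: "group H" and f: "f \<in> B \<rightarrow> carrier H"
  shows "free_extension F B H f \<in> hom F H"
proof -
  interpret F: group F using fr by (rule free_group_onD)
  interpret H: group H by (rule H)
  have word: "\<exists>ws. set (map snd ws) \<subseteq> B \<and> eval_word F ws = y" if "y \<in> carrier F" for y
    using F.generate_eval_word[of B y] free_group_onD[OF fr] that by metis
  show ?thesis
  proof (rule homI)
    fix x assume "x \<in> carrier F"
    then obtain u where "set (map snd u) \<subseteq> B" "eval_word F u = x" using word by blast
    then show "free_extension F B H f x \<in> carrier H"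
      using free_extension_eval_word[OF fr H f] f by force
  next
    fix x y assume "x \<in> carrier F" "y \<in> carrier F"
    then obtain u v where u: "set (map snd u) \<subseteq> B" "eval_word F u = x"
      and v: "set (map snd v) \<subseteq> B" "eval_word F v = y"
      using word by blast
    have "x \<otimes>\<^bsub>F\<^esub> y = eval_word F (u @ v)"
      using u v free_group_onD(2)[OF fr] by (auto simp: F.eval_word_append)
    moreover have "eval_word H (map (apsnd f) (u @ v))
        = eval_word H (map (apsnd f) u) \<otimes>\<^bsub>H\<^esub> eval_word H (map (apsnd f) v)"
      unfolding map_append
      by (rule H.eval_word_append[OF letters_map_apsnd[OF f u(1)] letters_map_apsnd[OF f v(1)]])
    ultimately show "free_extension F B H f (x \<otimes>\<^bsub>F\<^esub> y)
        = free_extension F B H f x \<otimes>\<^bsub>H\<^esub> free_extension F B H f y"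
      using u v free_extension_eval_word[OF fr H f] by (metis set_append le_sup_iff map_append)
  qed
qed

section \<open>Free groups are residually finite\<close>

lemma inj_on_extends_to_Bij:
  assumes "finite S" "D \<subseteq> S" "inj_on p D" "p ` D \<subseteq> S"
  obtains \<sigma> where "\<sigma> \<in> Bij S" "\<And>d. d \<in> D \<Longrightarrow> \<sigma> d = p d"
proof -
  have "card (S - D) = card (S - p ` D)"
    using assms finite_subset[OF assms(2,1)] by (simp add: card_Diff_subset card_image)
  then obtain h where h: "bij_betw h (S - D) (S - p ` D)"
    by (metis finite_same_card_bij finite_Diff assms(1))
  define \<sigma> where "\<sigma> = restrict (\<lambda>x. if x \<in> D then p x else h x) S"
  have "bij_betw \<sigma> D (p ` D)"
    by (rule bij_betw_cong[THEN iffD2, OF _ inj_on_imp_bij_betw[OF assms(3)]])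
      (use assms(2) in \<open>auto simp: \<sigma>_def\<close>)
  moreover have "bij_betw \<sigma> (S - D) (S - p ` D)"
    by (rule bij_betw_cong[THEN iffD2, OF _ h]) (auto simp: \<sigma>_def)
  ultimately have "bij_betw \<sigma> (D \<union> (S - D)) (p ` D \<union> (S - p ` D))"
    by (rule bij_betw_combine) blast
  moreover have "D \<union> (S - D) = S" "p ` D \<union> (S - p ` D) = S" using assms(2,4) by blast+
  ultimately have "\<sigma> \<in> Bij S" by (simp add: Bij_def \<sigma>_def)
  then show ?thesis using assms(2) by (intro that[of \<sigma>]) (auto simp: \<sigma>_def)
qed

lemma finite_carrier_BijGroup: "finite S \<Longrightarrow> finite (carrier (BijGroup S))"
proof (rule finite_subset)
  show "carrier (BijGroup S) \<subseteq> S \<rightarrow>\<^sub>E S"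
    by (auto simp: BijGroup_def Bij_def bij_betw_def PiE_def Pi_def)
qed (rule finite_PiE)

lemma BijGroup_mult_apply:
  "g \<in> carrier (BijGroup S) \<Longrightarrow> h \<in> carrier (BijGroup S) \<Longrightarrow> x \<in> S \<Longrightarrow>
    (g \<otimes>\<^bsub>BijGroup S\<^esub> h) x = g (h x)"
  by (simp add: BijGroup_def compose_def)

lemma reduced_word_no_cancellation:
  "reduced_word ws \<Longrightarrow> Suc i < length ws \<Longrightarrow> ws ! i = (b, x) \<Longrightarrow> ws ! Suc i \<noteq> (\<not> b, x)"
  unfolding reduced_word_def by fastforce

text \<open>The letter \<open>x\<close> moves position \<open>j + 1\<close> to \<open>j\<close> where the word reads \<open>x\<close>, and \<open>j\<close> to
  \<open>j + 1\<close> where it reads \<open>x\<^sup>-\<^sup>1\<close>; reducedness makes these prescriptions consistent.\<close>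
lemma reduced_word_letter_permutations:
  assumes red: "reduced_word ws"
  obtains f where "\<And>x. f x \<in> Bij {0..length ws}"
    "\<And>j x. j < length ws \<Longrightarrow> ws ! j = (True, x) \<Longrightarrow> f x (Suc j) = j"
    "\<And>j x. j < length ws \<Longrightarrow> ws ! j = (False, x) \<Longrightarrow> f x j = Suc j"
proof -
  define L where "L = length ws"
  define Up where "Up x = {Suc j | j. j < L \<and> ws ! j = (True, x)}" for x
  define Down where "Down x = {j. j < L \<and> ws ! j = (False, x)}" for x
  define p where "p x i = (if i \<in> Up x then i - 1 else Suc i)" for x i
  have no_cancel: "ws ! j = (b, x) \<Longrightarrow> ws ! Suc j = (\<not> b, x) \<Longrightarrow> Suc j < L \<Longrightarrow> False" for j b x
    using reduced_word_no_cancellation[OF red] by (auto simp: L_def)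
  have disj: "Up x \<inter> Down x = {}" for x
    using no_cancel[of _ True x] by (auto simp: Up_def Down_def)
  have "\<exists>\<sigma>. \<sigma> \<in> Bij {0..L} \<and> (\<forall>d \<in> Up x \<union> Down x. \<sigma> d = p x d)" for x
  proof -
    have inj: "inj_on (p x) (Up x \<union> Down x)"
      using disj[of x] no_cancel[of _ False x] by (auto simp: inj_on_def p_def Up_def Down_def)
    obtain \<sigma> where "\<sigma> \<in> Bij {0..L}" "\<And>d. d \<in> Up x \<union> Down x \<Longrightarrow> \<sigma> d = p x d"
      by (rule inj_on_extends_to_Bij[of "{0..L}" "Up x \<union> Down x" "p x", OF _ _ inj])
        (auto simp: Up_def Down_def p_def)
    then show ?thesis by blast
  qed
  then obtain f where f: "\<And>x. f x \<in> Bij {0..L}" "\<And>x d. d \<in> Up x \<union> Down x \<Longrightarrow> f x d = p x d"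
    by metis
  show ?thesis
  proof (rule that)
    show "f x \<in> Bij {0..length ws}" for x using f(1) by (simp add: L_def)
    show "f x (Suc j) = j" if "j < length ws" "ws ! j = (True, x)" for j x
      using that f(2)[of "Suc j" x] by (auto simp: L_def Up_def p_def)
    show "f x j = Suc j" if "j < length ws" "ws ! j = (False, x)" for j x
    proof -
      have "j \<in> Down x" "j \<notin> Up x" using that disj by (auto simp: L_def Down_def)
      then show ?thesis using f(2) by (simp add: p_def)
    qed
  qed
qed

text \<open>With the permutations above, the suffix of the word starting at position \<open>j\<close> moves \<open>n\<close>
  to \<open>j\<close>; in particular the whole word moves \<open>n\<close> to \<open>0\<close>.\<close>
lemma reduced_word_nontrivial_permutation:
  assumes red: "reduced_word ws" and ne: "ws \<noteq> []"
  obtains f where "f \<in> UNIV \<rightarrow> carrier (BijGroup {0..length ws})"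
    "eval_word (BijGroup {0..length ws}) (map (apsnd f) ws) \<noteq> \<one>\<^bsub>BijGroup {0..length ws}\<^esub>"
proof -
  define L where "L = length ws"
  define Sym where "Sym = BijGroup {0..L}"
  interpret Sym: group Sym by (simp add: Sym_def group_BijGroup)
  obtain f where f: "\<And>x. f x \<in> carrier Sym"
    "\<And>j x. j < L \<Longrightarrow> ws ! j = (True, x) \<Longrightarrow> f x (Suc j) = j"
    "\<And>j x. j < L \<Longrightarrow> ws ! j = (False, x) \<Longrightarrow> f x j = Suc j"
    using reduced_word_letter_permutations[OF red] unfolding Sym_def L_def BijGroup_def by auto
  have suffix: "eval_word Sym (map (apsnd f) (drop j ws)) L = j" if "j \<le> L" for j
    using that
  proof (induction "L - j" arbitrary: j)
    case 0
    then show ?case by (simp add: L_def Sym_def BijGroup_def)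
  next
    case (Suc k)
    then have j: "j < L" by simp
    obtain b x where bx: "ws ! j = (b, x)" by force
    have "drop j ws = (b, x) # drop (Suc j) ws" using j bx by (metis Cons_nth_drop_Suc L_def)
    then have "eval_word Sym (map (apsnd f) (drop j ws)) L
        = ((if b then f x else inv\<^bsub>Sym\<^esub> (f x)) \<otimes>\<^bsub>Sym\<^esub> eval_word Sym (map (apsnd f) (drop (Suc j) ws))) L"
      by simp
    also have "\<dots> = (if b then f x else inv\<^bsub>Sym\<^esub> (f x)) (Suc j)"
    proof -
      have "eval_word Sym (map (apsnd f) (drop (Suc j) ws)) \<in> carrier Sym"
        by (rule Sym.eval_word_closed) (use f(1) in auto)
      moreover have "(if b then f x else inv\<^bsub>Sym\<^esub> (f x)) \<in> carrier Sym" using f(1) by simp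
      moreover have "eval_word Sym (map (apsnd f) (drop (Suc j) ws)) L = Suc j"
        using Suc by simp
      ultimately show ?thesis unfolding Sym_def by (simp add: BijGroup_mult_apply)
    qed
    also have "\<dots> = j"
    proof (cases b)
      case False
      have "f x \<in> Bij {0..L}" using f(1) by (simp add: Sym_def BijGroup_def)
      then show ?thesis using False f(3)[OF j] bx j
        by (simp add: Sym_def inv_BijGroup Bij_def bij_betw_def inv_into_f_eq)
    qed (use f(2)[OF j] bx in simp)
    finally show ?case .
  qed
  have "eval_word Sym (map (apsnd f) ws) L \<noteq> \<one>\<^bsub>Sym\<^esub> L"
    using suffix[of 0] ne by (simp add: Sym_def BijGroup_def L_def)
  then have "eval_word Sym (map (apsnd f) ws) \<noteq> \<one>\<^bsub>Sym\<^esub>" by metis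
  then show ?thesis using that f(1) unfolding Sym_def L_def by blast
qed

lemma free_group_residually_finite:
  assumes fr: "free_group_on F B" and g: "g \<in> carrier F" "g \<noteq> \<one>\<^bsub>F\<^esub>"
  obtains n \<psi> where "\<psi> \<in> hom F (BijGroup {0..n::nat})" "\<psi> g \<noteq> \<one>\<^bsub>BijGroup {0..n}\<^esub>"
proof -
  interpret F: group F using fr by (rule free_group_onD)
  have B: "B \<subseteq> carrier F" using fr by (rule free_group_onD)
  obtain ws0 where "set (map snd ws0) \<subseteq> B" "eval_word F ws0 = g"
    using F.generate_eval_word[OF B] g(1) free_group_onD(3)[OF fr] by blast
  then obtain ws where ws: "set (map snd ws) \<subseteq> B" "reduced_word ws" "eval_word F ws = g"
    by (metis F.reduced_word_exists[OF _ B])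
  with g(2) have "ws \<noteq> []" by auto
  then obtain f where f: "f \<in> UNIV \<rightarrow> carrier (BijGroup {0..length ws})"
    "eval_word (BijGroup {0..length ws}) (map (apsnd f) ws) \<noteq> \<one>\<^bsub>BijGroup {0..length ws}\<^esub>"
    using reduced_word_nontrivial_permutation ws(2) by blast
  have fB: "f \<in> B \<rightarrow> carrier (BijGroup {0..length ws})" using f(1) by auto
  show ?thesis
  proof (rule that)
    show "free_extension F B (BijGroup {0..length ws}) f \<in> hom F (BijGroup {0..length ws})"
      by (rule free_extension_hom[OF fr group_BijGroup fB])
    show "free_extension F B (BijGroup {0..length ws}) f g \<noteq> \<one>\<^bsub>BijGroup {0..length ws}\<^esub>"
      using free_extension_eval_word[OF fr group_BijGroup fB ws(1)] ws(3) f(2) by simp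
  qed
qed

section \<open>Common kernels of homomorphisms into a fixed group\<close>

definition common_kernel :: "('a, 'b) monoid_scheme \<Rightarrow> ('c, 'd) monoid_scheme \<Rightarrow> 'a set" where
  "common_kernel F H = {y \<in> carrier F. \<forall>\<psi> \<in> hom F H. \<psi> y = \<one>\<^bsub>H\<^esub>}"

lemma group_hom_intro: "group F \<Longrightarrow> group H \<Longrightarrow> \<psi> \<in> hom F H \<Longrightarrow> group_hom F H \<psi>"
  by (simp add: group_hom_def group_hom_axioms_def)

lemma hom_eq_on_generate:
  assumes "group F" "group H" "\<psi> \<in> hom F H" "\<phi> \<in> hom F H" "R \<subseteq> carrier F"
    and "\<And>r. r \<in> R \<Longrightarrow> \<psi> r = \<phi> r" "y \<in> generate F R"
  shows "\<psi> y = \<phi> y"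
proof -
  interpret \<psi>: group_hom F H \<psi> using assms group_hom_intro by blast
  interpret \<phi>: group_hom F H \<phi> using assms group_hom_intro by blast
  from assms(7) show ?thesis
  proof (induction rule: generate.induct)
    case (eng h1 h2)
    then show ?case using \<psi>.G.generate_in_carrier[OF assms(5)] by simp
  qed (use assms(5,6) in auto)
qed

lemma subgroup_common_kernel:
  assumes "group F" "group H"
  shows "subgroup (common_kernel F H) F"
proof -
  interpret F: group F by fact
  have "common_kernel F H = carrier F \<inter> (\<Inter>\<psi> \<in> hom F H. kernel F H \<psi>)"
    by (auto simp: common_kernel_def kernel_def)
  also have "subgroup \<dots> F"
  proof (intro F.subgroups_Inter_pair F.subgroup_self F.subgroups_Inter)
    have "(\<lambda>_. \<one>\<^bsub>H\<^esub>) \<in> hom F H" by (rule homI) (simp_all add: group.is_monoid[OF assms(2)])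
    then show "(\<lambda>\<psi>. kernel F H \<psi>) ` hom F H \<noteq> {}" by blast
  qed (use assms group_hom.subgroup_kernel[OF group_hom_intro] in auto)
  finally show ?thesis .
qed

lemma conjugation_hom_normal:
  assumes "N \<lhd> G" "x \<in> carrier G"
  shows "(\<lambda>z. x \<otimes>\<^bsub>G\<^esub> z \<otimes>\<^bsub>G\<^esub> inv\<^bsub>G\<^esub> x) \<in> hom (G\<lparr>carrier := N\<rparr>) (G\<lparr>carrier := N\<rparr>)"
proof -
  interpret normal N G by fact
  show ?thesis
  proof (rule homI)
    fix z assume "z \<in> carrier (G\<lparr>carrier := N\<rparr>)"
    then show "x \<otimes>\<^bsub>G\<^esub> z \<otimes>\<^bsub>G\<^esub> inv\<^bsub>G\<^esub> x \<in> carrier (G\<lparr>carrier := N\<rparr>)"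
      using inv_op_closed2 assms(2) by simp
  next
    fix z w assume "z \<in> carrier (G\<lparr>carrier := N\<rparr>)" "w \<in> carrier (G\<lparr>carrier := N\<rparr>)"
    then have "z \<in> carrier G" "w \<in> carrier G" by auto
    moreover have "inv\<^bsub>G\<^esub> x \<otimes>\<^bsub>G\<^esub> (x \<otimes>\<^bsub>G\<^esub> y) = y" if "y \<in> carrier G" for y
      using assms(2) that by (simp add: m_assoc[symmetric])
    ultimately show "x \<otimes>\<^bsub>G\<^esub> (z \<otimes>\<^bsub>G\<lparr>carrier := N\<rparr>\<^esub> w) \<otimes>\<^bsub>G\<^esub> inv\<^bsub>G\<^esub> x
        = (x \<otimes>\<^bsub>G\<^esub> z \<otimes>\<^bsub>G\<^esub> inv\<^bsub>G\<^esub> x) \<otimes>\<^bsub>G\<lparr>carrier := N\<rparr>\<^esub>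
          (x \<otimes>\<^bsub>G\<^esub> w \<otimes>\<^bsub>G\<^esub> inv\<^bsub>G\<^esub> x)"
      using assms(2) by (simp add: m_assoc)
  qed
qed

lemma normal_common_kernel:
  assumes N: "N \<lhd> G" and H: "group H"
  shows "common_kernel (G\<lparr>carrier := N\<rparr>) H \<lhd> G"
proof -
  interpret N: normal N G by fact
  define F where "F = G\<lparr>carrier := N\<rparr>"
  have F: "group F" unfolding F_def by (rule N.subgroup_imp_group) (rule N.subgroup_axioms)
  have "subgroup (common_kernel F H) G"
    using N.incl_subgroup[OF N.subgroup_axioms] subgroup_common_kernel[OF F H] by (simp add: F_def)
  moreover have "x \<otimes>\<^bsub>G\<^esub> k \<otimes>\<^bsub>G\<^esub> inv\<^bsub>G\<^esub> x \<in> common_kernel F H"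
    if x: "x \<in> carrier G" and k: "k \<in> common_kernel F H" for x k
  proof -
    have "k \<in> N" using k by (simp add: common_kernel_def F_def)
    have "\<psi> (x \<otimes>\<^bsub>G\<^esub> k \<otimes>\<^bsub>G\<^esub> inv\<^bsub>G\<^esub> x) = \<one>\<^bsub>H\<^esub>" if "\<psi> \<in> hom F H" for \<psi>
    proof -
      have "\<psi> \<circ> (\<lambda>z. x \<otimes>\<^bsub>G\<^esub> z \<otimes>\<^bsub>G\<^esub> inv\<^bsub>G\<^esub> x) \<in> hom F H"
        using hom_compose[OF conjugation_hom_normal[OF N x] that[unfolded F_def]] by (simp add: F_def)
      then show ?thesis using k by (simp add: common_kernel_def)
    qed
    moreover have "x \<otimes>\<^bsub>G\<^esub> k \<otimes>\<^bsub>G\<^esub> inv\<^bsub>G\<^esub> x \<in> N" using N.inv_op_closed2 x \<open>k \<in> N\<close> by blast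
    ultimately show ?thesis by (simp add: common_kernel_def F_def)
  qed
  ultimately show ?thesis unfolding F_def by (simp add: N.normal_inv_iff)
qed

lemma finite_image_factor:
  assumes "finite (f ` A)" "\<And>a b. a \<in> A \<Longrightarrow> b \<in> A \<Longrightarrow> f a = f b \<Longrightarrow> g a = g b"
  shows "finite (g ` A)"
proof -
  define pick where "pick z = (SOME a. a \<in> A \<and> f a = z)" for z
  have "g a = g (pick (f a))" if a: "a \<in> A" for a
  proof -
    have "pick (f a) \<in> A \<and> f (pick (f a)) = f a"
      unfolding pick_def by (rule someI[of _ a]) (use a in blast)
    then show ?thesis using assms(2) a by metis
  qed
  then have "g ` A \<subseteq> (g \<circ> pick) ` f ` A" by auto
  then show ?thesis using assms(1) finite_subset by blast
qed

text \<open>An element of the subgroup generated by \<open>R\<close> is determined modulo the common kernel by its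
  images under all homomorphisms to \<open>H\<close>, and those only depend on the finitely many restrictions
  of the homomorphisms to \<open>R\<close>.\<close>
lemma finite_cosets_common_kernel:
  assumes F: "group F" and H: "group H" "finite (carrier H)" and R: "finite R" "R \<subseteq> carrier F"
  shows "finite ((\<lambda>y. common_kernel F H #>\<^bsub>F\<^esub> y) ` generate F R)"
proof (rule finite_image_factor)
  interpret F: group F by fact
  interpret H: group H by fact
  define K where "K = common_kernel F H"
  define \<Theta> where "\<Theta> y = {(restrict \<psi> R, \<psi> y) | \<psi>. \<psi> \<in> hom F H}" for y
  have "\<Theta> y \<subseteq> (R \<rightarrow>\<^sub>E carrier H) \<times> carrier H" if "y \<in> generate F R" for y
    using that F.generate_in_carrier[OF R(2)] R(2) by (auto simp: \<Theta>_def hom_def)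
  then have "\<Theta> ` generate F R \<subseteq> Pow ((R \<rightarrow>\<^sub>E carrier H) \<times> carrier H)" by blast
  then show "finite (\<Theta> ` generate F R)"
    by (rule finite_subset) (simp add: R(1) H(2) finite_PiE)
  fix y1 y2 assume y: "y1 \<in> generate F R" "y2 \<in> generate F R" and \<Theta>: "\<Theta> y1 = \<Theta> y2"
  have yF: "y1 \<in> carrier F" "y2 \<in> carrier F" using y F.generate_in_carrier[OF R(2)] by auto
  have "\<psi> (y1 \<otimes>\<^bsub>F\<^esub> inv\<^bsub>F\<^esub> y2) = \<one>\<^bsub>H\<^esub>" if \<psi>: "\<psi> \<in> hom F H" for \<psi>
  proof -
    interpret \<psi>: group_hom F H \<psi> using F H(1) \<psi> by (rule group_hom_intro)
    have "(restrict \<psi> R, \<psi> y1) \<in> \<Theta> y1" using \<psi> by (auto simp: \<Theta>_def)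
    then have "(restrict \<psi> R, \<psi> y1) \<in> \<Theta> y2" using \<Theta> by simp
    then obtain \<phi> where \<phi>: "\<phi> \<in> hom F H" "restrict \<phi> R = restrict \<psi> R" "\<phi> y2 = \<psi> y1"
      by (auto simp: \<Theta>_def)
    have "\<phi> y2 = \<psi> y2"
      using \<phi>(2) by (intro hom_eq_on_generate[OF F H(1) \<phi>(1) \<psi> R(2) _ y(2)]) (metis restrict_apply')
    then show ?thesis using \<phi>(3) yF by simp
  qed
  then have "y1 \<otimes>\<^bsub>F\<^esub> inv\<^bsub>F\<^esub> y2 \<in> K" using yF by (simp add: K_def common_kernel_def)
  then have "K #>\<^bsub>F\<^esub> (y1 \<otimes>\<^bsub>F\<^esub> inv\<^bsub>F\<^esub> y2) = K"
    using F.coset_join2 subgroup_common_kernel[OF F H(1)] yF by (simp add: K_def)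
  then show "K #>\<^bsub>F\<^esub> y1 = K #>\<^bsub>F\<^esub> y2"
    using F.coset_mult_inv1 yF subgroup.subset[OF subgroup_common_kernel[OF F H(1)]]
    by (simp add: K_def)
qed

section \<open>Finitely additive probabilities and their means\<close>

lemma floor_scaled_le: "\<phi> \<le> 1 \<Longrightarrow> nat \<lfloor>real n * \<phi>\<rfloor> \<le> n"
  by (metis floor_mono floor_of_nat mult_left_le nat_le_iff of_nat_0_le_iff)

lemma le_floor_scaled_iff: "0 \<le> \<phi> \<Longrightarrow> k \<le> nat \<lfloor>real n * \<phi>\<rfloor> \<longleftrightarrow> real k \<le> real n * \<phi>"
  by (simp add: le_nat_iff le_floor_iff)

locale finitely_additive_probability =
  fixes \<Omega> :: "'p set" and m :: "'p set \<Rightarrow> real"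
  assumes total: "m \<Omega> = 1"
    and nonneg: "\<And>A. A \<subseteq> \<Omega> \<Longrightarrow> 0 \<le> m A"
    and additive: "\<And>A B. A \<subseteq> \<Omega> \<Longrightarrow> B \<subseteq> \<Omega> \<Longrightarrow> A \<inter> B = {} \<Longrightarrow> m (A \<union> B) = m A + m B"

lemma amenable_iff:
  "amenable H \<longleftrightarrow> group H \<and> (\<exists>\<mu>. finitely_additive_probability (carrier H) \<mu> \<and>
     (\<forall>g \<in> carrier H. \<forall>A \<subseteq> carrier H. \<mu> (g <#\<^bsub>H\<^esub> A) = \<mu> A))"
  by (auto simp: amenable_def finitely_additive_probability_def)

context finitely_additive_probability
begin

lemma empty [simp]: "m {} = 0"
  using additive[of "{}" "{}"] by simp

lemma mono:
  assumes "A \<subseteq> B" "B \<subseteq> \<Omega>"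
  shows "m A \<le> m B"
proof -
  have "A \<union> (B - A) = B" using assms(1) by auto
  then have "m B = m A + m (B - A)" using additive[of A "B - A"] assms by auto
  then show ?thesis using nonneg[of "B - A"] assms(2) by auto
qed

lemma le_one: "A \<subseteq> \<Omega> \<Longrightarrow> m A \<le> 1"
  using mono[of A \<Omega>] total by simp

lemma additive_UN_lessThan:
  "(\<And>i. i < (n :: nat) \<Longrightarrow> D i \<subseteq> \<Omega>) \<Longrightarrow> disjoint_family_on D {..<n} \<Longrightarrow>
    m (\<Union>i<n. D i) = (\<Sum>i<n. m (D i))"
proof (induction n)
  case (Suc n)
  have "(\<Union>i<Suc n. D i) = (\<Union>i<n. D i) \<union> D n" by (auto simp: lessThan_Suc)
  moreover have "(\<Union>i<n. D i) \<inter> D n = {}"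
  proof -
    have "D i \<inter> D n = {}" if "i < n" for i
      using Suc.prems(2) that unfolding disjoint_family_on_def by simp
    then show ?thesis by blast
  qed
  moreover have "(\<Union>i<n. D i) \<subseteq> \<Omega>" using Suc.prems(1) by (meson UN_least less_SucI lessThan_iff)
  moreover have "disjoint_family_on D {..<n}"
    using Suc.prems(2) by (auto simp: disjoint_family_on_def)
  ultimately show ?case using Suc additive[of "\<Union>i<n. D i" "D n"] by simp
qed simp

text \<open>For \<open>h \<le> T\<close> on \<open>\<Omega>\<close>, this is the integral of \<open>h\<close> computed layer by layer.\<close>
definition level_sum :: "nat \<Rightarrow> ('p \<Rightarrow> nat) \<Rightarrow> real" where
  "level_sum T h = (\<Sum>k = 1..T. m {x \<in> \<Omega>. k \<le> h x})"

lemma level_sum_cong: "(\<And>x. x \<in> \<Omega> \<Longrightarrow> h x = h' x) \<Longrightarrow> level_sum T h = level_sum T h'"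
  unfolding level_sum_def by (intro sum.cong refl arg_cong[where f = m]) auto

lemma level_sum_nonneg: "0 \<le> level_sum T h"
  unfolding level_sum_def by (intro sum_nonneg) (auto intro: nonneg)

lemma level_sum_mono: "(\<And>x. x \<in> \<Omega> \<Longrightarrow> u x \<le> v x) \<Longrightarrow> level_sum T u \<le> level_sum T v"
  unfolding level_sum_def by (intro sum_mono mono) (auto intro: order_trans)

lemma level_empty:
  fixes u :: "'p \<Rightarrow> nat"
  assumes "\<And>x. x \<in> \<Omega> \<Longrightarrow> u x < k"
  shows "m {x \<in> \<Omega>. k \<le> u x} = 0"
proof -
  have "{x \<in> \<Omega>. k \<le> u x} = {}" using assms by fastforce
  then show ?thesis by (metis empty)
qed

lemma level_sum_zero: "level_sum T (\<lambda>_. 0) = 0"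
  unfolding level_sum_def by (intro sum.neutral ballI level_empty) auto

lemma level_sum_const: "level_sum T (\<lambda>_. T) = real T"
  unfolding level_sum_def using total by simp

lemma level_sum_le_one:
  assumes "\<And>x. x \<in> \<Omega> \<Longrightarrow> u x \<le> 1"
  shows "level_sum T u \<le> 1"
proof (cases "T = 0")
  case False
  have "level_sum T u = m {x \<in> \<Omega>. 1 \<le> u x} + (\<Sum>k = 2..T. m {x \<in> \<Omega>. k \<le> u x})"
    unfolding level_sum_def using False by (subst sum.atLeast_Suc_atMost) (auto simp: numeral_2_eq_2)
  also have "(\<Sum>k = 2..T. m {x \<in> \<Omega>. k \<le> u x}) = 0"
    by (intro sum.neutral ballI level_empty) (use assms in fastforce)
  finally show ?thesis using le_one[of "{x \<in> \<Omega>. 1 \<le> u x}"] by auto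
qed (simp add: level_sum_def)

lemma level_sum_extend:
  assumes "\<And>x. x \<in> \<Omega> \<Longrightarrow> u x \<le> T" "T \<le> T'"
  shows "level_sum T' u = level_sum T u"
proof -
  have "{1..T'} = {1..T} \<union> {Suc T..T'}" using assms(2) by auto
  then have "level_sum T' u = level_sum T u + (\<Sum>k = Suc T..T'. m {x \<in> \<Omega>. k \<le> u x})"
    unfolding level_sum_def by (simp add: sum.union_disjoint)
  also have "(\<Sum>k = Suc T..T'. m {x \<in> \<Omega>. k \<le> u x}) = 0"
    by (intro sum.neutral ballI level_empty) (use assms(1) in fastforce)
  finally show ?thesis by simp
qed

lemma level_sum_add_indicator:
  assumes D: "D \<subseteq> \<Omega>" and bound: "\<And>x. x \<in> \<Omega> \<Longrightarrow> h x + of_bool (x \<in> D) \<le> T"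
  shows "level_sum T (\<lambda>x. h x + of_bool (x \<in> D)) = level_sum T h + m D"
proof -
  have "level_sum T (\<lambda>x. h x + of_bool (x \<in> D))
      = (\<Sum>k = 1..T. m {x \<in> \<Omega>. k \<le> h x} + m {x \<in> D. h x = k - 1})"
    unfolding level_sum_def
  proof (intro sum.cong refl)
    fix k assume k: "k \<in> {1..T}"
    have "{x \<in> \<Omega>. k \<le> h x + of_bool (x \<in> D)} = {x \<in> \<Omega>. k \<le> h x} \<union> {x \<in> D. h x = k - 1}"
      using k D by auto
    moreover have "{x \<in> \<Omega>. k \<le> h x} \<inter> {x \<in> D. h x = k - 1} = {}" using k by auto
    ultimately show "m {x \<in> \<Omega>. k \<le> h x + of_bool (x \<in> D)}
        = m {x \<in> \<Omega>. k \<le> h x} + m {x \<in> D. h x = k - 1}"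
      using D by (auto intro!: additive)
  qed
  also have "\<dots> = level_sum T h + (\<Sum>j<T. m {x \<in> D. h x = j})"
    unfolding level_sum_def sum.distrib
    by (simp add: sum.atLeast1_atMost_eq lessThan_atLeast0 sum.shift_bounds_cl_Suc_ivl)
  also have "(\<Sum>j<T. m {x \<in> D. h x = j}) = m (\<Union>j<T. {x \<in> D. h x = j})"
    by (rule additive_UN_lessThan[symmetric]) (use D in \<open>auto simp: disjoint_family_on_def\<close>)
  also have "(\<Union>j<T. {x \<in> D. h x = j}) = D"
    using bound D by fastforce
  finally show ?thesis .
qed

lemma level_sum_add_min:
  assumes "\<And>x. x \<in> \<Omega> \<Longrightarrow> u x + v x \<le> T"
  shows "level_sum T (\<lambda>x. u x + min (v x) j) = level_sum T u + level_sum T (\<lambda>x. min (v x) j)"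
proof (induction j)
  case 0 then show ?case by (simp add: level_sum_zero)
next
  case (Suc j)
  define D where "D = {x \<in> \<Omega>. Suc j \<le> v x}"
  have step: "min (v x) (Suc j) = min (v x) j + of_bool (x \<in> D)" if "x \<in> \<Omega>" for x
    using that by (auto simp: D_def)
  have "level_sum T (\<lambda>x. u x + min (v x) (Suc j))
      = level_sum T (\<lambda>x. (u x + min (v x) j) + of_bool (x \<in> D))"
    by (rule level_sum_cong) (simp add: step)
  also have "\<dots> = level_sum T (\<lambda>x. u x + min (v x) j) + m D"
    by (rule level_sum_add_indicator) (use assms in \<open>fastforce simp: D_def\<close>)+
  also have "m D = level_sum T (\<lambda>x. min (v x) (Suc j)) - level_sum T (\<lambda>x. min (v x) j)"
  proof -
    have "level_sum T (\<lambda>x. min (v x) (Suc j)) = level_sum T (\<lambda>x. min (v x) j + of_bool (x \<in> D))"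
      by (rule level_sum_cong) (simp add: step)
    also have "\<dots> = level_sum T (\<lambda>x. min (v x) j) + m D"
      by (rule level_sum_add_indicator) (use assms in \<open>fastforce simp: D_def\<close>)+
    finally show ?thesis by simp
  qed
  finally show ?case using Suc.IH by simp
qed

lemma level_sum_add:
  assumes "\<And>x. x \<in> \<Omega> \<Longrightarrow> u x + v x \<le> T"
  shows "level_sum T (\<lambda>x. u x + v x) = level_sum T u + level_sum T v"
proof -
  have "\<And>x. x \<in> \<Omega> \<Longrightarrow> min (v x) T = v x" using assms by fastforce
  then show ?thesis
    using level_sum_add_min[OF assms, where j = T] level_sum_cong[of "\<lambda>x. min (v x) T" v T]
      level_sum_cong[of "\<lambda>x. u x + min (v x) T" "\<lambda>x. u x + v x" T] by simp
qed

text \<open>The mean of \<open>\<phi>\<close> rounded down to multiples of \<open>1 / n\<close>.\<close>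
definition discrete_mean :: "nat \<Rightarrow> ('p \<Rightarrow> real) \<Rightarrow> real" where
  "discrete_mean n \<phi> = level_sum n (\<lambda>x. nat \<lfloor>real n * \<phi> x\<rfloor>) / real n"

lemma discrete_mean_nonneg: "0 \<le> discrete_mean n \<phi>"
  by (simp add: discrete_mean_def level_sum_nonneg)

lemma discrete_mean_le_one:
  assumes "\<And>x. x \<in> \<Omega> \<Longrightarrow> \<phi> x \<le> 1"
  shows "discrete_mean n \<phi> \<le> 1"
proof -
  have "level_sum n (\<lambda>x. nat \<lfloor>real n * \<phi> x\<rfloor>) \<le> level_sum n (\<lambda>_. n)"
    by (rule level_sum_mono) (simp add: assms floor_scaled_le)
  then show ?thesis by (auto simp: discrete_mean_def level_sum_const divide_le_eq_1)
qed

lemma discrete_mean_one: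
  assumes "n \<ge> 1" "\<And>x. x \<in> \<Omega> \<Longrightarrow> \<phi> x = 1"
  shows "discrete_mean n \<phi> = 1"
proof -
  have "level_sum n (\<lambda>x. nat \<lfloor>real n * \<phi> x\<rfloor>) = level_sum n (\<lambda>_. n)"
    by (rule level_sum_cong) (simp add: assms(2))
  then show ?thesis using assms(1) by (simp add: discrete_mean_def level_sum_const)
qed

lemma discrete_mean_levels_cong:
  assumes "\<And>x. x \<in> \<Omega> \<Longrightarrow> 0 \<le> \<phi> x" "\<And>x. x \<in> \<Omega> \<Longrightarrow> 0 \<le> \<psi> x"
    and "\<And>t. m {x \<in> \<Omega>. t \<le> \<phi> x} = m {x \<in> \<Omega>. t \<le> \<psi> x}"
  shows "discrete_mean n \<phi> = discrete_mean n \<psi>"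
proof (cases "n = 0")
  case False
  have "{x \<in> \<Omega>. k \<le> nat \<lfloor>real n * g x\<rfloor>} = {x \<in> \<Omega>. real k / real n \<le> g x}"
    if "\<And>x. x \<in> \<Omega> \<Longrightarrow> 0 \<le> g x" for k g
    using that False by (auto simp: le_floor_scaled_iff field_simps)
  then show ?thesis
    using assms unfolding discrete_mean_def level_sum_def by simp
qed (simp add: discrete_mean_def)

lemma discrete_mean_double:
  assumes "\<And>x. x \<in> \<Omega> \<Longrightarrow> 0 \<le> \<phi> x" "\<And>x. x \<in> \<Omega> \<Longrightarrow> \<phi> x \<le> 1"
  shows "discrete_mean n \<phi> \<le> discrete_mean (2 * n) \<phi>"
proof -
  define u where "u x = nat \<lfloor>real n * \<phi> x\<rfloor>" for x
  define w where "w x = nat \<lfloor>real (2 * n) * \<phi> x\<rfloor>" for x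
  have wu: "u x + u x \<le> w x" if "x \<in> \<Omega>" for x
  proof -
    have "2 * \<lfloor>real n * \<phi> x\<rfloor> \<le> \<lfloor>2 * (real n * \<phi> x)\<rfloor>"
      using le_floor_add[of "real n * \<phi> x" "real n * \<phi> x"] by simp
    then show ?thesis using assms(1)[OF that] by (simp add: u_def w_def mult.assoc nat_mult_distrib)
  qed
  have w_le: "w x \<le> 2 * n" if "x \<in> \<Omega>" for x
    unfolding w_def using assms(2)[OF that] by (rule floor_scaled_le)
  have "level_sum (2 * n) w
      = level_sum (2 * n) (\<lambda>x. u x + u x) + level_sum (2 * n) (\<lambda>x. w x - (u x + u x))"
    using wu w_le by (subst level_sum_add[symmetric]) (auto intro!: level_sum_cong)
  also have "level_sum (2 * n) (\<lambda>x. u x + u x) = 2 * level_sum n u"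
  proof -
    have "u x \<le> n" if "x \<in> \<Omega>" for x unfolding u_def using assms(2)[OF that] by (rule floor_scaled_le)
    then show ?thesis using wu w_le
      by (subst level_sum_add) (force intro: order_trans, simp add: level_sum_extend)
  qed
  finally have "2 * level_sum n u \<le> level_sum (2 * n) w" using level_sum_nonneg by simp
  then have "level_sum n u / real n \<le> level_sum (2 * n) w / (2 * real n)"
    by (cases "n = 0") (simp_all add: field_simps)
  then show ?thesis by (simp add: discrete_mean_def u_def[abs_def] w_def[abs_def])
qed

lemma discrete_mean_add:
  assumes "n \<ge> 1" "\<And>x. x \<in> \<Omega> \<Longrightarrow> 0 \<le> \<phi> x" "\<And>x. x \<in> \<Omega> \<Longrightarrow> 0 \<le> \<psi> x"
    and "\<And>x. x \<in> \<Omega> \<Longrightarrow> \<phi> x + \<psi> x \<le> 1"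
  shows "\<bar>discrete_mean n (\<lambda>x. \<phi> x + \<psi> x) - discrete_mean n \<phi> - discrete_mean n \<psi>\<bar> \<le> 1 / real n"
proof -
  define u where "u x = nat \<lfloor>real n * \<phi> x\<rfloor>" for x
  define v where "v x = nat \<lfloor>real n * \<psi> x\<rfloor>" for x
  define w where "w x = nat \<lfloor>real n * (\<phi> x + \<psi> x)\<rfloor>" for x
  have uvw: "u x + v x \<le> w x \<and> w x \<le> u x + v x + 1" if "x \<in> \<Omega>" for x
  proof -
    have "\<lfloor>real n * \<phi> x\<rfloor> + \<lfloor>real n * \<psi> x\<rfloor> \<le> \<lfloor>real n * (\<phi> x + \<psi> x)\<rfloor> \<and>
        \<lfloor>real n * (\<phi> x + \<psi> x)\<rfloor> \<le> \<lfloor>real n * \<phi> x\<rfloor> + \<lfloor>real n * \<psi> x\<rfloor> + 1"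
      by (simp add: distrib_left floor_add)
    moreover have "int (u x) = \<lfloor>real n * \<phi> x\<rfloor>" "int (v x) = \<lfloor>real n * \<psi> x\<rfloor>"
      "int (w x) = \<lfloor>real n * (\<phi> x + \<psi> x)\<rfloor>"
      using assms(2,3)[OF that] by (simp_all add: u_def v_def w_def)
    ultimately show ?thesis by linarith
  qed
  have w_le: "w x \<le> n" if "x \<in> \<Omega>" for x
    unfolding w_def using assms(4)[OF that] by (rule floor_scaled_le)
  have "level_sum n w = level_sum n (\<lambda>x. u x + v x) + level_sum n (\<lambda>x. w x - (u x + v x))"
    using uvw w_le by (subst level_sum_add[symmetric]) (auto intro!: level_sum_cong)
  also have "level_sum n (\<lambda>x. u x + v x) = level_sum n u + level_sum n v"
    using uvw w_le by (intro level_sum_add) (force intro: order_trans)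
  finally have "level_sum n w - level_sum n u - level_sum n v = level_sum n (\<lambda>x. w x - (u x + v x))"
    by simp
  moreover have "level_sum n (\<lambda>x. w x - (u x + v x)) \<le> 1"
    using uvw by (intro level_sum_le_one) fastforce
  ultimately have "\<bar>level_sum n w - level_sum n u - level_sum n v\<bar> \<le> 1"
    using level_sum_nonneg by simp
  moreover have "discrete_mean n (\<lambda>x. \<phi> x + \<psi> x) - discrete_mean n \<phi> - discrete_mean n \<psi>
      = (level_sum n w - level_sum n u - level_sum n v) / real n"
    by (simp add: discrete_mean_def u_def[abs_def] v_def[abs_def] w_def[abs_def] diff_divide_distrib)
  ultimately show ?thesis by (simp add: abs_divide divide_right_mono)
qed

text \<open>Along \<open>n = 2\<^sup>j\<close> the discrete means increase, so the mean is their limit.\<close>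
definition mean :: "('p \<Rightarrow> real) \<Rightarrow> real" where
  "mean \<phi> = (SUP j. discrete_mean (2 ^ j) \<phi>)"

lemma mean_LIMSEQ:
  assumes "\<And>x. x \<in> \<Omega> \<Longrightarrow> 0 \<le> \<phi> x" "\<And>x. x \<in> \<Omega> \<Longrightarrow> \<phi> x \<le> 1"
  shows "(\<lambda>j. discrete_mean (2 ^ j) \<phi>) \<longlonglongrightarrow> mean \<phi>"
  unfolding mean_def
proof (rule LIMSEQ_incseq_SUP)
  show "bdd_above (range (\<lambda>j. discrete_mean (2 ^ j) \<phi>))"
    using discrete_mean_le_one assms(2) by (auto intro: bdd_aboveI[of _ 1])
  show "incseq (\<lambda>j. discrete_mean (2 ^ j) \<phi>)"
    using discrete_mean_double[OF assms] by (intro incseq_SucI) simp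
qed

lemma mean_nonneg:
  assumes "\<And>x. x \<in> \<Omega> \<Longrightarrow> 0 \<le> \<phi> x" "\<And>x. x \<in> \<Omega> \<Longrightarrow> \<phi> x \<le> 1"
  shows "0 \<le> mean \<phi>"
proof (rule LIMSEQ_le_const)
  show "(\<lambda>j. discrete_mean (2 ^ j) \<phi>) \<longlonglongrightarrow> mean \<phi>" using assms by (rule mean_LIMSEQ)
qed (simp add: discrete_mean_nonneg)

lemma mean_one: "(\<And>x. x \<in> \<Omega> \<Longrightarrow> \<phi> x = 1) \<Longrightarrow> mean \<phi> = 1"
  by (simp add: mean_def discrete_mean_one)

lemma mean_levels_cong:
  assumes "\<And>x. x \<in> \<Omega> \<Longrightarrow> 0 \<le> \<phi> x" "\<And>x. x \<in> \<Omega> \<Longrightarrow> 0 \<le> \<psi> x"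
    and "\<And>t. m {x \<in> \<Omega>. t \<le> \<phi> x} = m {x \<in> \<Omega>. t \<le> \<psi> x}"
  shows "mean \<phi> = mean \<psi>"
  unfolding mean_def using discrete_mean_levels_cong[OF assms] by simp

lemma mean_add:
  assumes "\<And>x. x \<in> \<Omega> \<Longrightarrow> 0 \<le> \<phi> x" "\<And>x. x \<in> \<Omega> \<Longrightarrow> 0 \<le> \<psi> x"
    and "\<And>x. x \<in> \<Omega> \<Longrightarrow> \<phi> x + \<psi> x \<le> 1"
  shows "mean (\<lambda>x. \<phi> x + \<psi> x) = mean \<phi> + mean \<psi>"
proof -
  have le1: "\<phi> x \<le> 1" "\<psi> x \<le> 1" if "x \<in> \<Omega>" for x
    using assms[OF that] by linarith+
  define err where "err j = discrete_mean (2 ^ j) (\<lambda>x. \<phi> x + \<psi> x)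
      - discrete_mean (2 ^ j) \<phi> - discrete_mean (2 ^ j) \<psi>" for j
  have "err \<longlonglongrightarrow> mean (\<lambda>x. \<phi> x + \<psi> x) - mean \<phi> - mean \<psi>"
    unfolding err_def using assms le1 by (intro tendsto_diff mean_LIMSEQ) (auto intro: add_nonneg_nonneg)
  moreover have "err \<longlonglongrightarrow> 0"
  proof (rule Lim_null_comparison)
    have "norm (err j) \<le> (1 / 2) ^ j" for j
      using discrete_mean_add[of "2 ^ j" \<phi> \<psi>, OF _ assms] by (simp add: err_def power_one_over)
    then show "\<forall>\<^sub>F j in sequentially. norm (err j) \<le> (1 / 2) ^ j" by (simp add: always_eventually)
  qed (simp add: LIMSEQ_realpow_zero)
  ultimately show ?thesis using LIMSEQ_unique by fastforce
qed

end

section \<open>Extensions of amenable groups\<close>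

locale kernel_mean = group_hom Q P \<pi> for Q (structure) and P (structure) and \<pi> +
  fixes \<mu> :: "'a set \<Rightarrow> real"
  assumes surj: "\<pi> ` carrier Q = carrier P"
    and kernel_fap: "finitely_additive_probability (kernel Q P \<pi>) \<mu>"
    and kernel_invariant: "\<And>k A. k \<in> kernel Q P \<pi> \<Longrightarrow> A \<subseteq> kernel Q P \<pi> \<Longrightarrow> \<mu> (k <# A) = \<mu> A"
begin

interpretation K: finitely_additive_probability "kernel Q P \<pi>" \<mu> by (rule kernel_fap)

text \<open>The mean of the trace of \<open>A\<close> on the fibre over \<open>p\<close>, transported to the kernel by a point of
  the fibre; by invariance of \<open>\<mu>\<close> the choice of that point does not matter.\<close>
definition fibre_mean :: "'a set \<Rightarrow> 'c \<Rightarrow> real" where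
  "fibre_mean A p = \<mu> {k \<in> kernel Q P \<pi>. inv_into (carrier Q) \<pi> p \<otimes> k \<in> A}"

lemma fibre_mean_eq:
  assumes q: "q \<in> carrier Q" "\<pi> q = p"
  shows "fibre_mean A p = \<mu> {k \<in> kernel Q P \<pi>. q \<otimes> k \<in> A}"
proof -
  define q0 where "q0 = inv_into (carrier Q) \<pi> p"
  have q0: "q0 \<in> carrier Q" "\<pi> q0 = p"
    using q surj by (auto simp: q0_def inv_into_into f_inv_into_f)
  define c where "c = inv q0 \<otimes> q"
  have "p \<in> carrier P" using q by auto
  then have c: "c \<in> kernel Q P \<pi>" using q q0 by (simp add: c_def kernel_def)
  then have c_inv: "inv c \<in> kernel Q P \<pi>"
    using subgroup.m_inv_closed[OF subgroup_kernel] by blast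
  define S where "S = {k \<in> kernel Q P \<pi>. q0 \<otimes> k \<in> A}"
  have "{k \<in> kernel Q P \<pi>. q \<otimes> k \<in> A} = inv c <# S"
  proof (intro equalityI subsetI)
    fix k assume k: "k \<in> {k \<in> kernel Q P \<pi>. q \<otimes> k \<in> A}"
    then have kQ: "k \<in> carrier Q" by (simp add: kernel_def)
    have cQ: "c \<in> carrier Q" using c by (simp add: kernel_def)
    have "c \<otimes> k \<in> kernel Q P \<pi>" using c k subgroup.m_closed[OF subgroup_kernel] by blast
    moreover have "q0 \<otimes> (c \<otimes> k) = q \<otimes> k"
      using q q0 kQ by (simp add: c_def G.m_assoc[symmetric])
    ultimately have "c \<otimes> k \<in> S" using k by (simp add: S_def)
    moreover have "k = inv c \<otimes> (c \<otimes> k)" using cQ kQ by (simp add: G.m_assoc[symmetric])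
    ultimately show "k \<in> inv c <# S" unfolding l_coset_def by blast
  next
    fix k assume "k \<in> inv c <# S"
    then obtain t where t: "t \<in> S" "k = inv c \<otimes> t" unfolding l_coset_def by blast
    then have tQ: "t \<in> carrier Q" by (simp add: S_def kernel_def)
    have "k \<in> kernel Q P \<pi>" using c_inv t subgroup.m_closed[OF subgroup_kernel] by (auto simp: S_def)
    moreover have "q \<otimes> k = q0 \<otimes> t"
    proof -
      have "inv c = inv q \<otimes> q0" using q q0 by (simp add: c_def G.inv_mult_group)
      then show ?thesis using q q0 tQ t(2) by (simp add: G.m_assoc[symmetric])
    qed
    ultimately show "k \<in> {k \<in> kernel Q P \<pi>. q \<otimes> k \<in> A}" using t(1) by (simp add: S_def)
  qed
  also have "\<mu> (inv c <# S) = \<mu> S" using c_inv by (intro kernel_invariant) (auto simp: S_def)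
  finally show ?thesis by (simp add: fibre_mean_def S_def q0_def)
qed

lemma fibre_mean_nonneg: "0 \<le> fibre_mean A p"
  unfolding fibre_mean_def by (rule K.nonneg) blast

lemma fibre_mean_le_one: "fibre_mean A p \<le> 1"
  unfolding fibre_mean_def by (rule K.le_one) blast

lemma fibre_mean_carrier:
  assumes "p \<in> carrier P"
  shows "fibre_mean (carrier Q) p = 1"
proof -
  have "inv_into (carrier Q) \<pi> p \<in> carrier Q" using assms surj by (auto intro: inv_into_into)
  then have "{k \<in> kernel Q P \<pi>. inv_into (carrier Q) \<pi> p \<otimes> k \<in> carrier Q} = kernel Q P \<pi>"
    by (auto simp: kernel_def)
  then show ?thesis by (simp add: fibre_mean_def K.total)
qed

lemma fibre_mean_Un:
  assumes "A \<inter> B = {}"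
  shows "fibre_mean (A \<union> B) p = fibre_mean A p + fibre_mean B p"
proof -
  define s where "s = inv_into (carrier Q) \<pi> p"
  define SA where "SA = {k \<in> kernel Q P \<pi>. s \<otimes> k \<in> A}"
  define SB where "SB = {k \<in> kernel Q P \<pi>. s \<otimes> k \<in> B}"
  have "SA \<subseteq> kernel Q P \<pi>" "SB \<subseteq> kernel Q P \<pi>" "SA \<inter> SB = {}"
    using assms by (auto simp: SA_def SB_def)
  then have "\<mu> (SA \<union> SB) = \<mu> SA + \<mu> SB" by (rule K.additive)
  moreover have "SA \<union> SB = {k \<in> kernel Q P \<pi>. s \<otimes> k \<in> A \<union> B}" by (auto simp: SA_def SB_def)
  ultimately show ?thesis by (simp add: fibre_mean_def SA_def SB_def s_def)
qed

lemma fibre_mean_translate: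
  assumes a: "a \<in> carrier Q" and A: "A \<subseteq> carrier Q" and p: "p \<in> carrier P"
  shows "fibre_mean (a <# A) (\<pi> a \<otimes>\<^bsub>P\<^esub> p) = fibre_mean A p"
proof -
  define q where "q = inv_into (carrier Q) \<pi> p"
  have q: "q \<in> carrier Q" "\<pi> q = p" using p surj by (auto simp: q_def inv_into_into f_inv_into_f)
  have "fibre_mean (a <# A) (\<pi> a \<otimes>\<^bsub>P\<^esub> p) = \<mu> {k \<in> kernel Q P \<pi>. (a \<otimes> q) \<otimes> k \<in> a <# A}"
    by (rule fibre_mean_eq) (use a q in simp_all)
  also have "{k \<in> kernel Q P \<pi>. (a \<otimes> q) \<otimes> k \<in> a <# A} = {k \<in> kernel Q P \<pi>. q \<otimes> k \<in> A}"
  proof -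
    have "a \<otimes> y \<in> a <# A \<longleftrightarrow> y \<in> A" if y: "y \<in> carrier Q" for y
    proof
      assume "a \<otimes> y \<in> a <# A"
      then obtain z where z: "z \<in> A" "a \<otimes> y = a \<otimes> z" unfolding l_coset_def by blast
      then have "y = z" using a A y by (subst (asm) G.l_cancel) auto
      then show "y \<in> A" using z by simp
    qed (unfold l_coset_def, blast)
    moreover have "(a \<otimes> q) \<otimes> k = a \<otimes> (q \<otimes> k)" "q \<otimes> k \<in> carrier Q"
      if "k \<in> kernel Q P \<pi>" for k
      using that a q by (simp_all add: kernel_def G.m_assoc)
    ultimately show ?thesis by (intro Collect_cong) (metis (no_types, lifting))
  qed
  finally show ?thesis using fibre_mean_eq[OF q, of A] by simp
qed

lemma fibre_mean_levels_translate:
  assumes a: "a \<in> carrier Q" and A: "A \<subseteq> carrier Q"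
  shows "{p \<in> carrier P. t \<le> fibre_mean (a <# A) p} = \<pi> a <#\<^bsub>P\<^esub> {p \<in> carrier P. t \<le> fibre_mean A p}"
proof (intro equalityI subsetI)
  fix p assume p: "p \<in> {p \<in> carrier P. t \<le> fibre_mean (a <# A) p}"
  define p' where "p' = inv\<^bsub>P\<^esub> \<pi> a \<otimes>\<^bsub>P\<^esub> p"
  have p': "p' \<in> carrier P" "p = \<pi> a \<otimes>\<^bsub>P\<^esub> p'"
    using p a by (auto simp: p'_def H.m_assoc[symmetric])
  then have "t \<le> fibre_mean A p'" using p fibre_mean_translate[OF a A p'(1)] by simp
  with p' show "p \<in> \<pi> a <#\<^bsub>P\<^esub> {p \<in> carrier P. t \<le> fibre_mean A p}"
    unfolding l_coset_def by blast
next
  fix p assume "p \<in> \<pi> a <#\<^bsub>P\<^esub> {p \<in> carrier P. t \<le> fibre_mean A p}"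
  then obtain p' where p': "p' \<in> carrier P" "t \<le> fibre_mean A p'" "p = \<pi> a \<otimes>\<^bsub>P\<^esub> p'"
    unfolding l_coset_def by blast
  then show "p \<in> {p \<in> carrier P. t \<le> fibre_mean (a <# A) p}"
    using fibre_mean_translate[OF a A p'(1)] a by simp
qed

end

text \<open>Averaging the fibrewise means over the quotient turns invariant means on the kernel and on
  the quotient into one on the whole group.\<close>
lemma amenable_extension:
  assumes \<pi>: "group_hom Q P \<pi>" "\<pi> ` carrier Q = carrier P"
    and P: "amenable P" and kernel: "amenable (Q\<lparr>carrier := kernel Q P \<pi>\<rparr>)"
  shows "amenable Q"
proof -
  interpret group_hom Q P \<pi> by (fact \<pi>)
  obtain \<nu> where \<nu>: "finitely_additive_probability (carrier P) \<nu>"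
    and \<nu>_invariant: "\<And>g A. g \<in> carrier P \<Longrightarrow> A \<subseteq> carrier P \<Longrightarrow> \<nu> (g <#\<^bsub>P\<^esub> A) = \<nu> A"
    using P unfolding amenable_iff by blast
  obtain \<mu> where \<mu>: "finitely_additive_probability (kernel Q P \<pi>) \<mu>"
    "\<And>k A. k \<in> kernel Q P \<pi> \<Longrightarrow> A \<subseteq> kernel Q P \<pi> \<Longrightarrow> \<mu> (k <#\<^bsub>Q\<^esub> A) = \<mu> A"
    using kernel unfolding amenable_iff by auto
  then interpret kernel_mean Q P \<pi> \<mu>
    using \<pi>(2) by unfold_locales (use \<mu> in \<open>auto simp: finitely_additive_probability_def\<close>)
  interpret \<nu>: finitely_additive_probability "carrier P" \<nu> by (fact \<nu>)
  define \<mu>Q where "\<mu>Q A = \<nu>.mean (fibre_mean A)" for A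
  have "finitely_additive_probability (carrier Q) \<mu>Q"
  proof
    show "\<mu>Q (carrier Q) = 1" by (simp add: \<mu>Q_def \<nu>.mean_one fibre_mean_carrier)
    show "0 \<le> \<mu>Q A" for A
      by (simp add: \<mu>Q_def \<nu>.mean_nonneg fibre_mean_nonneg fibre_mean_le_one)
    show "\<mu>Q (A \<union> B) = \<mu>Q A + \<mu>Q B" if "A \<inter> B = {}" for A B
    proof -
      have "fibre_mean A p + fibre_mean B p \<le> 1" for p
        using fibre_mean_Un[OF that, of p] fibre_mean_le_one[of "A \<union> B" p] by simp
      moreover have "fibre_mean (A \<union> B) = (\<lambda>p. fibre_mean A p + fibre_mean B p)"
        using fibre_mean_Un[OF that] by auto
      ultimately show ?thesis by (simp add: \<mu>Q_def \<nu>.mean_add fibre_mean_nonneg)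
    qed
  qed
  moreover have "\<mu>Q (g <#\<^bsub>Q\<^esub> A) = \<mu>Q A" if "g \<in> carrier Q" "A \<subseteq> carrier Q" for g A
    unfolding \<mu>Q_def using that
    by (intro \<nu>.mean_levels_cong) (simp_all add: fibre_mean_nonneg fibre_mean_levels_translate \<nu>_invariant)
  ultimately show ?thesis unfolding amenable_iff using G.group_axioms by blast
qed

section \<open>Locally finite groups are amenable\<close>

definition locally_finite :: "('a, 'b) monoid_scheme \<Rightarrow> bool" where
  "locally_finite H \<longleftrightarrow> (\<forall>R. finite R \<longrightarrow> R \<subseteq> carrier H \<longrightarrow> finite (generate H R))"

lemma (in group) l_coset_Int_subgroup:
  assumes "subgroup T G" "r \<in> T" "S \<subseteq> carrier G"
  shows "(r <# S) \<inter> T = (\<lambda>x. r \<otimes> x) ` (S \<inter> T)"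
proof (intro equalityI subsetI)
  fix y assume "y \<in> (r <# S) \<inter> T"
  then obtain x where x: "x \<in> S" "y = r \<otimes> x" "y \<in> T" unfolding l_coset_def by blast
  have "r \<in> carrier G" "x \<in> carrier G" using assms x subgroup.subset by auto
  then have "x = inv r \<otimes> y" using x(2) by (simp add: m_assoc[symmetric])
  then have "x \<in> T" using assms(1,2) x(3) by (simp add: subgroup.m_closed subgroup.m_inv_closed)
  with x show "y \<in> (\<lambda>x. r \<otimes> x) ` (S \<inter> T)" by blast
qed (use assms in \<open>auto simp: l_coset_def subgroup.m_closed\<close>)

lemma (in group) card_l_coset_Int_subgroup:
  assumes "subgroup T G" "r \<in> T" "S \<subseteq> carrier G"
  shows "card ((r <# S) \<inter> T) = card (S \<inter> T)"
proof -
  have "inj_on (\<lambda>x. r \<otimes> x) (S \<inter> T)"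
    using subgroup.mem_carrier[OF assms(1)] assms(2) by (intro inj_onI) (metis IntD2 l_cancel)
  then show ?thesis by (simp add: l_coset_Int_subgroup[OF assms] card_image)
qed

lemma closedin_equalities:
  assumes "\<And>i. i \<in> J \<Longrightarrow> continuous_map Y euclideanreal (f i)"
    and "\<And>i. i \<in> J \<Longrightarrow> continuous_map Y euclideanreal (g i)"
  shows "closedin Y {x \<in> topspace Y. \<forall>i \<in> J. f i x = g i x}"
proof (cases "J = {}")
  case False
  then have "{x \<in> topspace Y. \<forall>i \<in> J. f i x = g i x} = (\<Inter>i \<in> J. {x \<in> topspace Y. f i x = g i x})"
    by auto
  moreover have "closedin Y {x \<in> topspace Y. f i x = g i x}" if "i \<in> J" for i
    using assms that by (intro closedin_continuous_maps_eq[OF Hausdorff_space_euclidean])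
  ultimately show ?thesis using False by auto
qed simp

lemma (in group) counting_mean_finite_subgroup:
  assumes T: "subgroup T G" "finite T"
  shows "finitely_additive_probability (carrier G) (\<lambda>A. real (card (A \<inter> T)) / real (card T))"
    and "\<And>r S. r \<in> T \<Longrightarrow> S \<subseteq> carrier G \<Longrightarrow>
      real (card ((r <# S) \<inter> T)) / real (card T) = real (card (S \<inter> T)) / real (card T)"
proof -
  have "card T > 0" using T subgroup.one_closed[OF T(1)] by (auto simp: card_gt_0_iff)
  moreover have "carrier G \<inter> T = T" using subgroup.subset[OF T(1)] by blast
  moreover have "card ((A \<union> B) \<inter> T) = card (A \<inter> T) + card (B \<inter> T)" if "A \<inter> B = {}" for A B
    using that T(2) by (simp add: Int_Un_distrib2 card_Un_disjoint disjoint_iff)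
  ultimately show "finitely_additive_probability (carrier G) (\<lambda>A. real (card (A \<inter> T)) / real (card T))"
    by unfold_locales (simp_all add: add_divide_distrib)
qed (simp add: card_l_coset_Int_subgroup[OF T(1)])

text \<open>Means on \<open>H\<close> invariant under left translation by the elements of \<open>R\<close>, viewed as points of
  the cube \<open>[0, 1]\<^bsup>Pow (carrier H)\<^esup>\<close>.\<close>
definition invariant_means :: "('a, 'b) monoid_scheme \<Rightarrow> 'a set \<Rightarrow> ('a set \<Rightarrow> real) set" where
  "invariant_means H R = {\<mu> \<in> Pow (carrier H) \<rightarrow>\<^sub>E {0..1}. \<mu> (carrier H) = 1 \<and>
     (\<forall>A \<in> Pow (carrier H). \<forall>B \<in> Pow (carrier H). A \<inter> B = {} \<longrightarrow> \<mu> (A \<union> B) = \<mu> A + \<mu> B) \<and>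
     (\<forall>r \<in> R. \<forall>S \<in> Pow (carrier H). \<mu> (r <#\<^bsub>H\<^esub> S) = \<mu> S)}"

lemma invariant_means_antimono: "R \<subseteq> R' \<Longrightarrow> invariant_means H R' \<subseteq> invariant_means H R"
  unfolding invariant_means_def by blast

lemma (in group) closedin_invariant_means:
  assumes "R \<subseteq> carrier G"
  shows "closedin (product_topology (\<lambda>_. top_of_set {0..1}) (Pow (carrier G))) (invariant_means G R)"
proof -
  define Y where "Y = product_topology (\<lambda>_. top_of_set {0..1::real}) (Pow (carrier G))"
  have proj: "continuous_map Y euclideanreal (\<lambda>\<mu>. \<mu> A)" if "A \<subseteq> carrier G" for A
    using continuous_map_product_projection[of A "Pow (carrier G)" "\<lambda>_. top_of_set {0..1::real}"] that
    unfolding Y_def by (auto intro: continuous_map_into_fulltopology)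
  have coset: "r <# S \<subseteq> carrier G" if "r \<in> R" "S \<subseteq> carrier G" for r S
    using assms that by (auto simp: l_coset_def)
  have "closedin Y {\<mu> \<in> topspace Y. \<forall>A \<in> {carrier G}. \<mu> A = 1}"
    using proj by (intro closedin_equalities) auto
  moreover have "closedin Y {\<mu> \<in> topspace Y. \<forall>i \<in> {(A, B) \<in> Pow (carrier G) \<times> Pow (carrier G). A \<inter> B = {}}.
      \<mu> (fst i \<union> snd i) = \<mu> (fst i) + \<mu> (snd i)}"
    using proj by (intro closedin_equalities continuous_map_add) auto
  moreover have "closedin Y {\<mu> \<in> topspace Y. \<forall>i \<in> R \<times> Pow (carrier G). \<mu> (fst i <# snd i) = \<mu> (snd i)}"
    using proj coset by (intro closedin_equalities) auto
  ultimately have "closedin Y ({\<mu> \<in> topspace Y. \<forall>A \<in> {carrier G}. \<mu> A = 1} \<inter>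
      {\<mu> \<in> topspace Y. \<forall>i \<in> {(A, B) \<in> Pow (carrier G) \<times> Pow (carrier G). A \<inter> B = {}}.
        \<mu> (fst i \<union> snd i) = \<mu> (fst i) + \<mu> (snd i)} \<inter>
      {\<mu> \<in> topspace Y. \<forall>i \<in> R \<times> Pow (carrier G). \<mu> (fst i <# snd i) = \<mu> (snd i)})"
    by (intro closedin_Int)
  also have "\<dots> = invariant_means G R" by (auto simp: Y_def invariant_means_def)
  finally show ?thesis unfolding Y_def .
qed

lemma (in group) invariant_means_nonempty:
  assumes lf: "locally_finite G" and R: "finite R" "R \<subseteq> carrier G"
  shows "invariant_means G R \<noteq> {}"
proof -
  define T where "T = generate G R"
  have T: "subgroup T G" "finite T" "R \<subseteq> T"
    using R lf generate_is_subgroup generate.incl by (auto simp: T_def locally_finite_def)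
  interpret T: finitely_additive_probability "carrier G" "\<lambda>A. real (card (A \<inter> T)) / real (card T)"
    using counting_mean_finite_subgroup(1)[OF T(1,2)] .
  have "(\<lambda>A \<in> Pow (carrier G). real (card (A \<inter> T)) / real (card T)) \<in> invariant_means G R"
    using T.nonneg T.le_one T.total T.additive counting_mean_finite_subgroup(2)[OF T(1,2)] T(3) R(2)
    by (auto simp: invariant_means_def l_coset_def)
  then show ?thesis by blast
qed

text \<open>By compactness of the cube, the closed sets of means invariant under finite subsets, which have
  the finite intersection property by the previous lemma, have a common point.\<close>
lemma amenable_if_locally_finite:
  assumes H: "group H" and lf: "locally_finite H"
  shows "amenable H"
proof -
  define Y where "Y = product_topology (\<lambda>_. top_of_set {0..1::real}) (Pow (carrier H))"
  define Fin where "Fin = {R. finite R \<and> R \<subseteq> carrier H}"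
  have "compact_space Y" unfolding Y_def
    by (rule compact_space_product_topology[THEN iffD2]) (auto intro!: compact_space_subtopology)
  moreover have "\<forall>C \<in> invariant_means H ` Fin. closedin Y C"
    using group.closedin_invariant_means[OF H] by (auto simp: Y_def Fin_def)
  moreover have "\<Inter> \<F> \<noteq> {}" if \<F>: "finite \<F>" "\<F> \<subseteq> invariant_means H ` Fin" for \<F>
  proof -
    obtain Rs where Rs: "Rs \<subseteq> Fin" "finite Rs" "\<F> = invariant_means H ` Rs"
      using finite_subset_image[OF \<F>] by blast
    then have "invariant_means H (\<Union> Rs) \<subseteq> \<Inter> \<F>"
      using invariant_means_antimono[OF Union_upper] by blast
    moreover have "finite (\<Union> Rs)" "\<Union> Rs \<subseteq> carrier H" using Rs by (auto simp: Fin_def)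
    then have "invariant_means H (\<Union> Rs) \<noteq> {}" by (rule group.invariant_means_nonempty[OF H lf])
    ultimately show ?thesis by blast
  qed
  ultimately have "\<Inter> (invariant_means H ` Fin) \<noteq> {}" unfolding compact_space_fip by blast
  then obtain \<mu> where \<mu>: "\<And>R. R \<in> Fin \<Longrightarrow> \<mu> \<in> invariant_means H R" by blast
  have "finitely_additive_probability (carrier H) \<mu>"
    using \<mu>[of "{}"] by unfold_locales (auto simp: Fin_def invariant_means_def PiE_iff)
  moreover have "\<mu> (g <#\<^bsub>H\<^esub> A) = \<mu> A" if "g \<in> carrier H" "A \<subseteq> carrier H" for g A
    using \<mu>[of "{g}"] that by (auto simp: Fin_def invariant_means_def)
  ultimately show ?thesis unfolding amenable_iff using H by blast
qed

section \<open>Amenable quotients\<close>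

lemma (in group) residually_amenableI:
  assumes "\<And>g. g \<in> carrier G \<Longrightarrow> g \<noteq> \<one> \<Longrightarrow> \<exists>K. K \<lhd> G \<and> g \<notin> K \<and> amenable (G Mod K)"
  shows "residually_amenable G"
  unfolding residually_amenable_def
proof (intro ballI impI)
  fix g assume g: "g \<in> carrier G" "g \<noteq> \<one>"
  then obtain K where K: "K \<lhd> G" "g \<notin> K" "amenable (G Mod K)" using assms by blast
  interpret K: normal K G by (fact K(1))
  have "K #> g \<noteq> K" using K(2) g(1) coset_join1 K.subgroup_axioms by blast
  then show "\<exists>(H :: 'a set monoid) h. group H \<and> amenable H \<and> h \<in> hom G H \<and>
      h ` carrier G = carrier H \<and> h g \<noteq> \<one>\<^bsub>H\<^esub>"
    using K(3) K.factorgroup_is_group K.r_coset_hom_Mod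
    by (intro exI[of _ "G Mod K"] exI[of _ "\<lambda>x. K #> x"]) (auto simp: carrier_FactGroup)
qed

context
  fixes G :: "('a, 'b) monoid_scheme" (structure) and K N :: "'a set"
  assumes KN: "K \<lhd> G" "N \<lhd> G" "K \<subseteq> N"
begin

interpretation G: group G using KN(1) by (rule normal.axioms(2))
interpretation K: normal K G by (fact KN(1))
interpretation N: normal N G by (fact KN(2))

lemma Mod_projection_r_coset:
  assumes "x \<in> carrier G"
  shows "N <#> (K #> x) = N #> x"
proof -
  have "N <#> K \<subseteq> N <#> N" by (rule mono_set_mult) (simp_all add: KN(3))
  then have "N <#> K \<subseteq> N" using N.subgroup_axioms G.subgroup_mult_id by simp
  moreover have "N \<subseteq> N <#> K"
  proof
    fix n assume "n \<in> N"
    then have "n = n \<otimes> \<one>" by simp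
    with \<open>n \<in> N\<close> show "n \<in> N <#> K" unfolding set_mult_def using K.one_closed by blast
  qed
  ultimately show ?thesis using G.setmult_rcos_assoc[of N K x] assms K.subset N.subset by simp
qed

lemma Mod_projection_group_hom: "group_hom (G Mod K) (G Mod N) (\<lambda>A. N <#> A)"
proof (intro group_hom.intro group_hom_axioms.intro K.factorgroup_is_group N.factorgroup_is_group homI)
  fix A assume "A \<in> carrier (G Mod K)"
  then obtain x where "x \<in> carrier G" "A = K #> x" by (auto simp: carrier_FactGroup)
  then show "N <#> A \<in> carrier (G Mod N)" by (simp add: Mod_projection_r_coset carrier_FactGroup)
next
  fix A B assume "A \<in> carrier (G Mod K)" "B \<in> carrier (G Mod K)"
  then obtain x y where xy: "x \<in> carrier G" "A = K #> x" "y \<in> carrier G" "B = K #> y"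
    by (auto simp: carrier_FactGroup)
  then show "N <#> (A \<otimes>\<^bsub>G Mod K\<^esub> B) = (N <#> A) \<otimes>\<^bsub>G Mod N\<^esub> (N <#> B)"
    by (simp add: K.rcos_sum N.rcos_sum Mod_projection_r_coset)
qed

lemma Mod_projection_surj: "(\<lambda>A. N <#> A) ` carrier (G Mod K) = carrier (G Mod N)"
proof -
  have "(\<lambda>A. N <#> A) ` carrier (G Mod K) = (\<lambda>x. N <#> (K #> x)) ` carrier G"
    by (simp add: carrier_FactGroup image_image)
  also have "\<dots> = (\<lambda>x. N #> x) ` carrier G" by (rule image_cong) (simp_all add: Mod_projection_r_coset)
  finally show ?thesis by (simp add: carrier_FactGroup)
qed

lemma Mod_projection_kernel: "kernel (G Mod K) (G Mod N) (\<lambda>A. N <#> A) = (\<lambda>n. K #> n) ` N"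
proof (intro equalityI subsetI)
  fix A assume "A \<in> kernel (G Mod K) (G Mod N) (\<lambda>A. N <#> A)"
  then obtain x where x: "x \<in> carrier G" "A = K #> x" "N <#> A = N"
    by (auto simp: kernel_def carrier_FactGroup)
  then have "x \<in> N" using G.coset_join1 N.subgroup_axioms Mod_projection_r_coset by metis
  then show "A \<in> (\<lambda>n. K #> n) ` N" using x(2) by blast
next
  fix A assume "A \<in> (\<lambda>n. K #> n) ` N"
  then obtain n where n: "n \<in> N" "A = K #> n" by blast
  then have "n \<in> carrier G" by auto
  then show "A \<in> kernel (G Mod K) (G Mod N) (\<lambda>A. N <#> A)"
    using n G.coset_join2 N.subgroup_axioms
    by (auto simp: kernel_def carrier_FactGroup Mod_projection_r_coset)
qed

end

text \<open>The quotient of \<open>N\<close> by the common kernel is locally finite: the images of a finitely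
  generated subgroup are the finitely many cosets counted in the lemma above.\<close>
lemma locally_finite_common_kernel_quotient:
  assumes N: "N \<lhd> G" and H: "group H" "finite (carrier H)"
  defines "K \<equiv> common_kernel (G\<lparr>carrier := N\<rparr>) H"
  shows "locally_finite ((G Mod K)\<lparr>carrier := (\<lambda>n. K #>\<^bsub>G\<^esub> n) ` N\<rparr>)"
proof -
  interpret N: normal N G by (fact N)
  interpret K: normal K G unfolding K_def using N H(1) by (rule normal_common_kernel)
  define F where "F = G\<lparr>carrier := N\<rparr>"
  define Q where "Q = G Mod K"
  have F: "group F" unfolding F_def by (rule N.subgroup_imp_group) (rule N.subgroup_axioms)
  have Q: "group Q" unfolding Q_def by (rule K.factorgroup_is_group)
  have h: "group_hom F Q (\<lambda>y. K #>\<^bsub>G\<^esub> y)"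
  proof (intro group_hom.intro group_hom_axioms.intro F Q homI)
    show "K #>\<^bsub>G\<^esub> y \<in> carrier Q" if "y \<in> carrier F" for y
      using that by (auto simp: F_def Q_def carrier_FactGroup)
    show "K #>\<^bsub>G\<^esub> (x \<otimes>\<^bsub>F\<^esub> y) = (K #>\<^bsub>G\<^esub> x) \<otimes>\<^bsub>Q\<^esub> (K #>\<^bsub>G\<^esub> y)"
      if "x \<in> carrier F" "y \<in> carrier F" for x y
      using that by (auto simp: F_def Q_def K.rcos_sum)
  qed
  have M: "subgroup ((\<lambda>n. K #>\<^bsub>G\<^esub> n) ` N) Q"
    using group_hom.subgroup_img_is_subgroup[OF h group.subgroup_self[OF F]] by (simp add: F_def)
  show ?thesis unfolding locally_finite_def
  proof (intro allI impI)
    fix R assume R: "finite R" "R \<subseteq> carrier ((G Mod K)\<lparr>carrier := (\<lambda>n. K #>\<^bsub>G\<^esub> n) ` N\<rparr>)"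
    then obtain R' where R': "R' \<subseteq> N" "finite R'" "R = (\<lambda>n. K #>\<^bsub>G\<^esub> n) ` R'"
      using finite_subset_image[of R "\<lambda>n. K #>\<^bsub>G\<^esub> n" N] by auto
    have "generate (Q\<lparr>carrier := (\<lambda>n. K #>\<^bsub>G\<^esub> n) ` N\<rparr>) R = generate Q R"
      using R(2) M by (intro group.generate_consistent[OF Q]) (simp_all add: Q_def)
    also have "\<dots> = (\<lambda>y. K #>\<^bsub>F\<^esub> y) ` generate F R'"
      using group_hom.generate_img[OF h, of R'] R'(1,3) by (simp add: F_def)
    finally show "finite (generate ((G Mod K)\<lparr>carrier := (\<lambda>n. K #>\<^bsub>G\<^esub> n) ` N\<rparr>) R)"
      using finite_cosets_common_kernel[OF F H R'(2)] R'(1) by (simp add: Q_def F_def K_def)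
  qed
qed

lemma amenable_Mod_common_kernel:
  assumes N: "N \<lhd> G" "amenable (G Mod N)" and H: "group H" "finite (carrier H)"
  shows "amenable (G Mod common_kernel (G\<lparr>carrier := N\<rparr>) H)"
proof -
  define K where "K = common_kernel (G\<lparr>carrier := N\<rparr>) H"
  have K: "K \<lhd> G" "K \<subseteq> N"
    using normal_common_kernel[OF N(1) H(1)] by (auto simp: K_def common_kernel_def)
  have \<pi>: "group_hom (G Mod K) (G Mod N) (\<lambda>A. N <#>\<^bsub>G\<^esub> A)"
    by (rule Mod_projection_group_hom[OF K(1) N(1) K(2)])
  have "group ((G Mod K)\<lparr>carrier := kernel (G Mod K) (G Mod N) (\<lambda>A. N <#>\<^bsub>G\<^esub> A)\<rparr>)"
    using group_hom.subgroup_kernel[OF \<pi>] by (rule group.subgroup_imp_group[OF group_hom.axioms(1)[OF \<pi>]])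
  moreover have "locally_finite ((G Mod K)\<lparr>carrier := kernel (G Mod K) (G Mod N) (\<lambda>A. N <#>\<^bsub>G\<^esub> A)\<rparr>)"
    using locally_finite_common_kernel_quotient[OF N(1) H, folded K_def]
    by (simp add: Mod_projection_kernel[OF K(1) N(1) K(2)])
  ultimately have "amenable (G Mod K)"
    using amenable_extension[OF \<pi> Mod_projection_surj[OF K(1) N(1) K(2)] N(2)] amenable_if_locally_finite
    by blast
  then show ?thesis by (simp add: K_def)
qed

theorem corollary3p4:
  fixes G :: "'a monoid" and N :: "'a set"
  assumes "group G"
    and "N \<lhd> G"
    and "is_free_group (G\<lparr>carrier := N\<rparr>)"
    and "amenable (G Mod N)"
  shows "residually_amenable G"
proof (rule group.residually_amenableI[OF assms(1)])
  fix g assume g: "g \<in> carrier G" "g \<noteq> \<one>\<^bsub>G\<^esub>"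
  show "\<exists>K. K \<lhd> G \<and> g \<notin> K \<and> amenable (G Mod K)"
  proof (cases "g \<in> N")
    case True
    obtain B where "free_group_on (G\<lparr>carrier := N\<rparr>) B"
      using assms(3) unfolding is_free_group_def by blast
    then obtain n \<psi> where \<psi>: "\<psi> \<in> hom (G\<lparr>carrier := N\<rparr>) (BijGroup {0..n :: nat})"
      "\<psi> g \<noteq> \<one>\<^bsub>BijGroup {0..n}\<^esub>"
      by (rule free_group_residually_finite) (use True g in auto)
    let ?K = "common_kernel (G\<lparr>carrier := N\<rparr>) (BijGroup {0..n})"
    have "?K \<lhd> G" by (rule normal_common_kernel[OF assms(2) group_BijGroup])
    moreover have "g \<notin> ?K" using \<psi> by (auto simp: common_kernel_def)
    moreover have "amenable (G Mod ?K)"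
      by (rule amenable_Mod_common_kernel[OF assms(2,4) group_BijGroup finite_carrier_BijGroup]) simp
    ultimately show ?thesis by blast
  qed (use assms(2,4) in blast)
qed

end
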